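(* Let $r\ge1$. For every $N\ge1$, every $k\in\mathbb{N}$ and all $d,d'\in\mathbb{Z}$, \[\frac1N\Big|\{n<N:(\Delta^{(r)}(n),\Delta^{(r)}_k(n))=(d,d')\}\Big|\le rb\;\mathbb{P}\big(\{x\in\mathbb{X}:(\Delta^{(r)}(x),\Delta^{(r)}_k(x))=(d,d')\}\big).\] In particular $\frac1N|\{n<N:\Delta^{(r)}(n)=d\}|\le rb\,\mathbb{P}(\{x\in\mathbb{X}:\Delta^{(r)}(x)=d\})$.
   Context: Fix an integer $b\ge2$. $\mathbb{X}:=\{0,\dots,b-1\}^{\mathbb{N}}$ is the space of $b$-adic integers $x=(x_k)_{k\ge0}$ (with $x_0$ the units digit), with the product topology and the addition with carries extending addition of integers: $(x+y)_0$ and carry $c_0$ are determined by $x_0+y_0$ (if $<b$, digit $x_0+y_0$ and carry $0$; else digit $x_0+y_0-b$ and carry $1$), and inductively $(x+y)_\ell$, $c_\ell$ from $x_\ell+y_\ell+c_{\ell-1}$ in the same way. $\mathbb{N}$ is embedded in $\mathbb{X}$ by identifying $n$ with its sequence of base-$b$ digits (finitely many nonzero). $T(x):=x+1$. $\mathbb{P}$ is the normalized Haar measure on $\mathbb{X}$, i.e. the product of uniform measures on $\{0,\dots,b-1\}$ (digits i.i.d. uniform). For $k\in\mathbb{N}$, $s_k(x):=x_0+\dots+x_k$ and $\Delta_k^{(r)}(x):=s_k(x+r)-s_k(x)$. For all $x$ except finitely many, $x$ and $x+r$ differ in only finitely many digits and $\Delta^{(r)}(x):=\lim_{k\to\infty}\Delta_k^{(r)}(x)$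 is defined; for $n\in\mathbb{N}$ it equals $s(n+r)-s(n)$, where $s$ is the base-$b$ sum of digits. *)

theory Defs
  imports "HOL-Probability.Probability"
begin

text \<open>b-adic integers are represented as digit sequences x :: nat \<Rightarrow> nat (x 0 = units digit),
  with all digits in {0..<b} (the space of the Haar measure below).\<close>

fun badic_carry :: "nat \<Rightarrow> (nat \<Rightarrow> nat) \<Rightarrow> (nat \<Rightarrow> nat) \<Rightarrow> nat \<Rightarrow> nat" where
  "badic_carry b x y 0 = (if x 0 + y 0 < b then 0 else 1)"
| "badic_carry b x y (Suc l) = (if x (Suc l) + y (Suc l) + badic_carry b x y l < b then 0 else 1)"

definition badic_add :: "nat \<Rightarrow> (nat \<Rightarrow> nat) \<Rightarrow> (nat \<Rightarrow> nat) \<Rightarrow> (nat \<Rightarrow> nat)" where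
  "badic_add b x y l =
     (let t = x l + y l + (case l of 0 \<Rightarrow> 0 | Suc m \<Rightarrow> badic_carry b x y m)
      in if t < b then t else t - b)"

definition badic_of_nat :: "nat \<Rightarrow> nat \<Rightarrow> (nat \<Rightarrow> nat)" where
  "badic_of_nat b n = (\<lambda>k. n div b ^ k mod b)"

definition partial_digit_sum :: "nat \<Rightarrow> (nat \<Rightarrow> nat) \<Rightarrow> nat" where
  "partial_digit_sum k x = (\<Sum>i\<le>k. x i)"

definition Delta_k :: "nat \<Rightarrow> nat \<Rightarrow> nat \<Rightarrow> (nat \<Rightarrow> nat) \<Rightarrow> int" where
  "Delta_k b r k x =
     int (partial_digit_sum k (badic_add b x (badic_of_nat b r))) - int (partial_digit_sum k x)"

text \<open>\<Delta>^{(r)}(x) = lim_{k\<rightarrow>\<infinity>} \<Delta>_k^{(r)}(x) (an arbitrary integer at the finitely many x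
  where the limit does not exist).\<close>
definition Delta :: "nat \<Rightarrow> nat \<Rightarrow> (nat \<Rightarrow> nat) \<Rightarrow> int" where
  "Delta b r x = lim (\<lambda>k. Delta_k b r k x)"

definition haar :: "nat \<Rightarrow> (nat \<Rightarrow> nat) measure" where
  "haar b = (\<Pi>\<^sub>M i\<in>(UNIV::nat set). uniform_count_measure {0..<b})"

end

theory Submission
  imports Defs "HOL-Library.Countable_Set"
begin

text \<open>If adding r to x produces no carry out of the first m digits, then the whole sequence
  k \<mapsto> Delta_k(x) is determined by those m digits, so it is constant on the cylinder of x of
  length m. This applies to every n < N as soon as N + r \<le> b^m, and the least such m has
  b^m \<le> r b N. The cylinders of the distinct n < N are disjoint of measure b^(-m), whence
  #{n < N. ...} \<le> b^m P(...) \<le> r b N P(...). The event is measurable because every point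
  that is not eventually b - 1 (a countable exceptional set) also has such a cylinder.\<close>

lemma badic_carry_le_1: "badic_carry b x y l \<le> 1"
  by (cases l) auto

lemma badic_add_plus_carry:
  "badic_add b x y l + b * badic_carry b x y l
     = x l + y l + (case l of 0 \<Rightarrow> 0 | Suc m \<Rightarrow> badic_carry b x y m)"
  by (cases l) (auto simp: badic_add_def Let_def)

lemma sum_badic_add:
  "(\<Sum>i\<le>l. badic_add b x y i * b ^ i) + badic_carry b x y l * b ^ Suc l
     = (\<Sum>i\<le>l. (x i + y i) * b ^ i)"
proof (induction l)
  case 0
  show ?case using badic_add_plus_carry[of b x y 0] by (simp add: mult.commute)
next
  case (Suc l)
  have step: "badic_add b x y (Suc l) + b * badic_carry b x y (Suc l)
      = x (Suc l) + y (Suc l) + badic_carry b x y l"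
    using badic_add_plus_carry[of b x y "Suc l"] by simp
  have "(\<Sum>i\<le>Suc l. badic_add b x y i * b ^ i) + badic_carry b x y (Suc l) * b ^ Suc (Suc l)
      = (\<Sum>i\<le>l. badic_add b x y i * b ^ i)
        + (badic_add b x y (Suc l) + b * badic_carry b x y (Suc l)) * b ^ Suc l"
    by (simp add: algebra_simps)
  also have "\<dots> = ((\<Sum>i\<le>l. badic_add b x y i * b ^ i) + badic_carry b x y l * b ^ Suc l)
                 + (x (Suc l) + y (Suc l)) * b ^ Suc l"
    by (simp only: step) (simp add: algebra_simps)
  also have "\<dots> = (\<Sum>i\<le>Suc l. (x i + y i) * b ^ i)"
    by (simp only: Suc.IH) simp
  finally show ?case .
qed

lemma badic_add_carry_prefix_cong:
  assumes "\<forall>i\<le>l. x i = x' i"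
  shows "badic_carry b x y l = badic_carry b x' y l \<and> badic_add b x y l = badic_add b x' y l"
  using assms
proof (induction l)
  case 0
  then show ?case by (simp add: badic_add_def)
next
  case (Suc l)
  then have "badic_carry b x y l = badic_carry b x' y l" by auto
  with Suc.prems show ?case by (simp add: badic_add_def)
qed

lemma badic_carry_eq_0_beyond:
  assumes "badic_carry b x y l = 0" "\<forall>i>l. y i = 0" "\<forall>i. x i < b" "l \<le> i"
  shows "badic_carry b x y i = 0"
  using assms(4)
proof (induction i rule: dec_induct)
  case (step i)
  then show ?case using assms(2,3) by simp
qed (use assms(1) in simp)

lemma badic_add_eq_beyond:
  assumes "badic_carry b x y l = 0" "\<forall>i>l. y i = 0" "\<forall>i. x i < b" "l < i"
  shows "badic_add b x y i = x i"
proof -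
  obtain j where i: "i = Suc j" using assms(4) by (cases i) auto
  with assms(4) have "l \<le> j" by simp
  then have "badic_carry b x y j = 0" using badic_carry_eq_0_beyond assms(1-3) by blast
  then show ?thesis using i assms(2-4) by (simp add: badic_add_def)
qed

lemma badic_of_nat_less: "b \<ge> 1 \<Longrightarrow> badic_of_nat b n i < b"
  by (simp add: badic_of_nat_def)

lemma badic_of_nat_eq_0:
  assumes "n < b ^ m" "m \<le> i"
  shows "badic_of_nat b n i = 0"
proof (cases "b = 0")
  case False
  then have "n < b ^ i" using assms power_increasing[of m i b] by simp
  then show ?thesis by (simp add: badic_of_nat_def)
qed (use assms in \<open>cases m; cases i; simp add: badic_of_nat_def\<close>)

lemma sum_badic_of_nat: "(\<Sum>i<m. badic_of_nat b n i * b ^ i) = n mod b ^ m"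
proof (induction m)
  case (Suc m)
  have "n mod b ^ Suc m = b ^ m * (n div b ^ m mod b) + n mod b ^ m"
    by (metis mod_mult2_eq power_Suc2)
  then show ?case using Suc by (simp add: badic_of_nat_def mult.commute)
qed simp

lemma badic_of_nat_prefix_inj:
  assumes "\<forall>i<m. badic_of_nat b n i = badic_of_nat b n' i" "n < b ^ m" "n' < b ^ m"
  shows "n = n'"
proof -
  have "(\<Sum>i<m. badic_of_nat b n i * b ^ i) = (\<Sum>i<m. badic_of_nat b n' i * b ^ i)"
    using assms(1) by simp
  then show ?thesis using assms(2,3) by (simp add: sum_badic_of_nat)
qed

text \<open>The carry computed at index m - 1 is the one passed into digit m.\<close>

definition carry_free :: "nat \<Rightarrow> nat \<Rightarrow> (nat \<Rightarrow> nat) \<Rightarrow> nat \<Rightarrow> bool" where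
  "carry_free b r x m \<longleftrightarrow> 1 \<le> m \<and> r < b ^ m \<and> badic_carry b x (badic_of_nat b r) (m - 1) = 0"

lemma Delta_k_prefix_cong:
  assumes cf: "carry_free b r x m" and x: "\<forall>i. x i < b" and y: "\<forall>i. y i < b"
    and agree: "\<forall>i<m. y i = x i"
  shows "Delta_k b r k y = Delta_k b r k x"
proof -
  let ?R = "badic_of_nat b r"
  have m: "1 \<le> m" and R: "\<forall>i>m - 1. ?R i = 0" and cx: "badic_carry b x ?R (m - 1) = 0"
    using cf by (auto simp: carry_free_def intro: badic_of_nat_eq_0)
  have cy: "badic_carry b y ?R (m - 1) = 0"
    using badic_add_carry_prefix_cong[of "m - 1" y x b ?R] agree cx m by auto
  have "int (badic_add b y ?R i) - int (y i) = int (badic_add b x ?R i) - int (x i)" for i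
  proof (cases "i < m")
    case True
    then show ?thesis using badic_add_carry_prefix_cong[of i y x b ?R] agree by auto
  next
    case False
    then have "m - 1 < i" using m by simp
    then show ?thesis
      using badic_add_eq_beyond[OF cy R y] badic_add_eq_beyond[OF cx R x] by simp
  qed
  then show ?thesis
    unfolding Delta_k_def partial_digit_sum_def by (simp add: of_nat_sum sum_subtractf[symmetric])
qed

lemma carry_free_badic_of_nat:
  assumes "1 \<le> m" "n + r < b ^ m"
  shows "carry_free b r (badic_of_nat b n) m"
proof -
  obtain l where m: "m = Suc l" using assms(1) by (cases m) auto
  let ?c = "badic_carry b (badic_of_nat b n) (badic_of_nat b r) l"
  have "(\<Sum>i\<le>l. (badic_of_nat b n i + badic_of_nat b r i) * b ^ i) = n + r"
    using assms(2) unfolding m lessThan_Suc_atMost[symmetric]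
    by (simp add: distrib_right sum.distrib sum_badic_of_nat)
  then have "(\<Sum>i\<le>l. badic_add b (badic_of_nat b n) (badic_of_nat b r) i * b ^ i) + ?c * b ^ m = n + r"
    using sum_badic_add[of b "badic_of_nat b n" "badic_of_nat b r" l] m by simp
  then have "?c * b ^ m < b ^ m" using assms(2) by linarith
  then have "?c = 0" by simp
  then show ?thesis using assms unfolding carry_free_def m by simp
qed

lemma carry_free_exists:
  assumes b: "b \<ge> 2" and x: "\<forall>i. x i < b" and not_eventually: "\<not> (\<exists>m. \<forall>i\<ge>m. x i = b - 1)"
  shows "\<exists>m. carry_free b r x m"
proof -
  have "r < 2 ^ r" by (rule less_exp)
  also have "\<dots> \<le> b ^ r" using b by (simp add: power_mono)
  finally have r: "r < b ^ r" .
  obtain j where j: "r \<le> j" "x j \<noteq> b - 1" using not_eventually by auto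
  \<comment> \<open>r has digit 0 at j, so the digit x j < b - 1 absorbs any incoming carry.\<close>
  have "x j + 1 < b" using j x[rule_format, of j] by auto
  moreover have "badic_of_nat b r j = 0" using badic_of_nat_eq_0 r j(1) by blast
  ultimately have "badic_carry b x (badic_of_nat b r) j = 0"
    using badic_carry_le_1[of b x "badic_of_nat b r" "j - 1"] by (cases j) auto
  moreover have "r < b ^ Suc j"
    using r b j power_increasing[of r "Suc j" b] by simp
  ultimately show ?thesis unfolding carry_free_def by (intro exI[of _ "Suc j"]) auto
qed

definition cylinder :: "nat \<Rightarrow> (nat \<Rightarrow> nat) \<Rightarrow> nat \<Rightarrow> (nat \<Rightarrow> nat) set" where
  "cylinder b x m = {y \<in> space (haar b). \<forall>i<m. y i = x i}"

lemma space_haar: "space (haar b) = {x. \<forall>i. x i < b}"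
  by (auto simp: haar_def space_PiM space_uniform_count_measure PiE_UNIV_domain)

lemma prob_space_haar: "b \<ge> 1 \<Longrightarrow> prob_space (haar b)"
  unfolding haar_def by (rule prob_space_PiM) (auto intro!: prob_space_uniform_count_measure)

lemma cylinder_prod_emb:
  "cylinder b x m
     = prod_emb UNIV (\<lambda>_. uniform_count_measure {0..<b}) {..<m} (Pi\<^sub>E {..<m} (\<lambda>i. {x i}))"
  unfolding cylinder_def haar_def prod_emb_def
  by (auto simp: space_PiM PiE_iff restrict_def extensional_def)

lemma
  assumes b: "b \<ge> 1" and x: "\<forall>i<m. x i < b"
  shows cylinder_in_sets: "cylinder b x m \<in> sets (haar b)"
    and measure_cylinder: "measure (haar b) (cylinder b x m) = 1 / real b ^ m"
proof -
  interpret prob_space "uniform_count_measure {0..<b}"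
    using b by (auto intro!: prob_space_uniform_count_measure)
  interpret P: product_prob_space "\<lambda>_. uniform_count_measure {0..<b}" UNIV
    by unfold_locales
  have singletons: "{x i} \<in> sets (uniform_count_measure {0..<b})" if "i \<in> {..<m}" for i
    using x that by (auto simp: sets_uniform_count_measure)
  show "cylinder b x m \<in> sets (haar b)"
    unfolding cylinder_prod_emb haar_def using singletons by (intro sets_PiM_I) auto
  have "measure (haar b) (cylinder b x m)
      = (\<Prod>i\<in>{..<m}. measure (uniform_count_measure {0..<b}) {x i})"
    unfolding cylinder_prod_emb haar_def using singletons by (intro P.measure_PiM_emb) auto
  also have "\<dots> = (\<Prod>i\<in>{..<m}. 1 / real b)"
    using x by (intro prod.cong) (auto simp: measure_uniform_count_measure)
  finally show "measure (haar b) (cylinder b x m) = 1 / real b ^ m"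
    by (simp add: power_one_over)
qed

lemma cylinder_subset_Delta_k_event:
  assumes "carry_free b r x m" "x \<in> space (haar b)" "P (\<lambda>k. Delta_k b r k x)"
  shows "cylinder b x m \<subseteq> {y \<in> space (haar b). P (\<lambda>k. Delta_k b r k y)}"
proof
  fix y assume y: "y \<in> cylinder b x m"
  have "(\<lambda>k. Delta_k b r k y) = (\<lambda>k. Delta_k b r k x)"
  proof
    fix k show "Delta_k b r k y = Delta_k b r k x"
      using y assms(2) by (intro Delta_k_prefix_cong[OF assms(1)]) (auto simp: cylinder_def space_haar)
  qed
  then show "y \<in> {y \<in> space (haar b). P (\<lambda>k. Delta_k b r k y)}"
    using y assms(3) by (simp add: cylinder_def)
qed

lemma singleton_in_sets_haar:
  assumes b: "b \<ge> 1" and x: "x \<in> space (haar b)"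
  shows "{x} \<in> sets (haar b)"
proof -
  have "{x} = (\<Inter>m. cylinder b x m)"
  proof (intro equalityI subsetI)
    fix y assume "y \<in> (\<Inter>m. cylinder b x m)"
    then have "\<forall>m. \<forall>i<m. y i = x i" by (auto simp: cylinder_def)
    then show "y \<in> {x}" by (auto intro!: ext)
  qed (use x in \<open>auto simp: cylinder_def\<close>)
  also have "\<dots> \<in> sets (haar b)"
    using x b by (intro sets.countable_INT') (auto simp: space_haar intro: cylinder_in_sets)
  finally show ?thesis .
qed

lemma countable_eventually_const: "countable {x :: nat \<Rightarrow> 'a::countable. \<exists>m::nat. \<forall>i\<ge>m. x i = c}"
proof (rule countable_subset)
  show "{x. \<exists>m::nat. \<forall>i\<ge>m. x i = c} \<subseteq> range (\<lambda>l i. if i < length l then l ! i else c)"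
  proof
    fix x assume "x \<in> {x. \<exists>m::nat. \<forall>i\<ge>m. x i = c}"
    then obtain m where m: "\<forall>i\<ge>m. x i = c" by auto
    have "x = (\<lambda>i. if i < length (map x [0..<m]) then map x [0..<m] ! i else c)"
      using m by (intro ext) auto
    then show "x \<in> range (\<lambda>l i. if i < length l then l ! i else c)" by blast
  qed
qed simp

lemma Delta_k_event_in_sets:
  fixes P :: "(nat \<Rightarrow> int) \<Rightarrow> bool"
  assumes b: "b \<ge> 2"
  shows "{x \<in> space (haar b). P (\<lambda>k. Delta_k b r k x)} \<in> sets (haar b)"
    (is "?A \<in> _")
proof -
  define E where "E = {x :: nat \<Rightarrow> nat. \<exists>m::nat. \<forall>i\<ge>m. x i = b - 1}"
  define F where "F = {cylinder b x m | x m. (\<forall>i<m. x i < b) \<and> cylinder b x m \<subseteq> ?A}"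
  have "?A - E \<subseteq> \<Union>F"
  proof
    fix x assume xA: "x \<in> ?A - E"
    then have x: "\<forall>i. x i < b" by (auto simp: space_haar)
    moreover have "\<not> (\<exists>m. \<forall>i\<ge>m. x i = b - 1)" using xA by (simp add: E_def)
    ultimately obtain m where m: "carry_free b r x m" using carry_free_exists[OF b] by blast
    have "cylinder b x m \<subseteq> ?A" using cylinder_subset_Delta_k_event[OF m] xA by blast
    then have "cylinder b x m \<in> F" unfolding F_def using x by blast
    moreover have "x \<in> cylinder b x m" using xA by (simp add: cylinder_def)
    ultimately show "x \<in> \<Union>F" by blast
  qed
  moreover have "\<Union>F \<subseteq> ?A" unfolding F_def by blast
  ultimately have A: "?A = \<Union>F \<union> (?A \<inter> E)" by blast
  have F_range: "F \<subseteq> range (\<lambda>l. cylinder b ((!) l) (length l))"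
  proof
    fix C assume "C \<in> F"
    then obtain x m where C: "C = cylinder b x m" unfolding F_def by blast
    then have "C = cylinder b ((!) (map x [0..<m])) (length (map x [0..<m]))"
      by (simp add: cylinder_def)
    then show "C \<in> range (\<lambda>l. cylinder b ((!) l) (length l))" by blast
  qed
  have "countable F" using countable_subset[OF F_range] by simp
  moreover have "F \<subseteq> sets (haar b)" using b unfolding F_def by (auto intro: cylinder_in_sets)
  ultimately have "\<Union>F \<in> sets (haar b)" by (rule sets.countable_Union)
  moreover have "?A \<inter> E \<in> sets (haar b)"
  proof (rule sets.countable)
    show "countable (?A \<inter> E)"
      unfolding E_def by (rule countable_subset[OF _ countable_eventually_const]) blast
  qed (use b in \<open>auto intro: singleton_in_sets_haar\<close>)
  ultimately show ?thesis by (subst A) auto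
qed

lemma card_le_measure_cylinders:
  assumes b: "b \<ge> 1" and A: "A \<in> sets (haar b)"
    and S: "\<forall>n\<in>S. n < b ^ m \<and> cylinder b (badic_of_nat b n) m \<subseteq> A"
  shows "real (card S) \<le> real b ^ m * measure (haar b) A"
proof -
  interpret prob_space "haar b" using prob_space_haar[OF b] .
  let ?C = "\<lambda>n. cylinder b (badic_of_nat b n) m"
  have digits: "\<forall>i<m. badic_of_nat b n i < b" for n using b by (simp add: badic_of_nat_less)
  have "finite S" using S by (auto intro: finite_subset[of _ "{..<b ^ m}"])
  have "disjoint_family_on ?C S"
    unfolding disjoint_family_on_def
  proof (intro ballI impI, rule ccontr)
    fix n n' assume nn: "n \<in> S" "n' \<in> S" "n \<noteq> n'" "?C n \<inter> ?C n' \<noteq> {}"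
    then have "\<forall>i<m. badic_of_nat b n i = badic_of_nat b n' i" by (auto simp: cylinder_def)
    then show False using badic_of_nat_prefix_inj S nn by blast
  qed
  then have "measure (haar b) (\<Union>n\<in>S. ?C n) = (\<Sum>n\<in>S. measure (haar b) (?C n))"
    using \<open>finite S\<close> b digits by (intro finite_measure_finite_Union) (auto intro: cylinder_in_sets)
  also have "\<dots> = real (card S) / real b ^ m"
    using b digits by (simp add: measure_cylinder)
  finally have "real (card S) / real b ^ m \<le> measure (haar b) A"
    using A S by (metis UN_least finite_measure_mono)
  then show ?thesis using b by (simp add: field_simps)
qed

lemma exists_power_between:
  fixes b r N :: nat
  assumes b: "b \<ge> 2" and r: "r \<ge> 1" and N: "N \<ge> 1"
  obtains m where "1 \<le> m" "N + r \<le> b ^ m" "b ^ m \<le> r * b * N"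
proof -
  have "N + r < 2 ^ (N + r)" by (rule less_exp)
  also have "\<dots> \<le> b ^ (N + r)" using b by (simp add: power_mono)
  finally have "N + r \<le> b ^ (N + r)" by simp
  define m where "m = (LEAST m. N + r \<le> b ^ m)"
  have m: "N + r \<le> b ^ m" unfolding m_def by (rule LeastI) fact
  have "m \<noteq> 0" using m N r by (intro notI) simp
  then have "\<not> N + r \<le> b ^ (m - 1)" unfolding m_def by (intro not_less_Least) (simp add: m_def)
  moreover have "N + r - 1 \<le> r * N" using N r by (cases N) auto
  ultimately have "b ^ (m - 1) \<le> r * N" by linarith
  then have "b * b ^ (m - 1) \<le> r * b * N" by simp
  then have "b ^ m \<le> r * b * N" using \<open>m \<noteq> 0\<close> by (metis power_eq_if)
  with that \<open>m \<noteq> 0\<close> m show ?thesis by (simp add: Suc_le_eq)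
qed

lemma frequency_le_measure_Delta_k_event:
  fixes P :: "(nat \<Rightarrow> int) \<Rightarrow> bool"
  assumes b: "b \<ge> 2" and r: "r \<ge> 1" and N: "N \<ge> 1"
  shows "real (card {n. n < N \<and> P (\<lambda>k. Delta_k b r k (badic_of_nat b n))}) / real N
     \<le> real (r * b) * measure (haar b) {x \<in> space (haar b). P (\<lambda>k. Delta_k b r k x)}"
proof -
  let ?S = "{n. n < N \<and> P (\<lambda>k. Delta_k b r k (badic_of_nat b n))}"
  let ?A = "{x \<in> space (haar b). P (\<lambda>k. Delta_k b r k x)}"
  obtain m where m: "1 \<le> m" "N + r \<le> b ^ m" "b ^ m \<le> r * b * N"
    using exists_power_between[OF b r N] .
  have "n < b ^ m \<and> cylinder b (badic_of_nat b n) m \<subseteq> ?A" if n: "n \<in> ?S" for n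
  proof
    have "n + r < b ^ m" using n m(2) by simp
    then have cf: "carry_free b r (badic_of_nat b n) m"
      using carry_free_badic_of_nat m(1) by blast
    show "cylinder b (badic_of_nat b n) m \<subseteq> ?A"
      using cylinder_subset_Delta_k_event[OF cf] n b by (simp add: space_haar badic_of_nat_less)
  qed (use n m(2) r in simp)
  then have "real (card ?S) \<le> real b ^ m * measure (haar b) ?A"
    using b Delta_k_event_in_sets[OF b] by (intro card_le_measure_cylinders) auto
  also have "\<dots> \<le> real (r * b * N) * measure (haar b) ?A"
    using m(3) by (intro mult_right_mono) (simp_all only: of_nat_power [symmetric] of_nat_le_iff measure_nonneg)
  finally show ?thesis using N by (simp add: divide_le_eq mult_ac)
qed

theorem mainTheorem4:
  fixes b r N k :: nat and d d' :: int
  assumes "b \<ge> 2" and "r \<ge> 1" and "N \<ge> 1"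
  shows "real (card {n. n < N \<and> Delta b r (badic_of_nat b n) = d
                        \<and> Delta_k b r k (badic_of_nat b n) = d'}) / real N
           \<le> real (r * b) * measure (haar b)
                {x \<in> space (haar b). Delta b r x = d \<and> Delta_k b r k x = d'}
         \<and> real (card {n. n < N \<and> Delta b r (badic_of_nat b n) = d}) / real N
           \<le> real (r * b) * measure (haar b) {x \<in> space (haar b). Delta b r x = d}"
  using frequency_le_measure_Delta_k_event[OF assms, of "\<lambda>s. lim s = d \<and> s k = d'"]
    frequency_le_measure_Delta_k_event[OF assms, of "\<lambda>s. lim s = d"]
  by (simp add: Delta_def)

end
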